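(* Let $G$ be a finite group and let $p$ be a prime. Then $G$ does not have a redundant Sylow $p$-subgroup if and only if there exists a $p$-element $x\in G$ that belongs to a unique Sylow $p$-subgroup of $G$.
   Context: For a finite group $G$ and a prime $p$, $G_p$ denotes the set of $p$-elements of $G$ and $\mathrm{Syl}_p(G)$ the set of Sylow $p$-subgroups of $G$. $G$ is said to have a redundant Sylow $p$-subgroup if $G_p$ is contained in the union of the members of some proper subset of $\mathrm{Syl}_p(G)$. *)

theory Defs
  imports "HOL-Algebra.Algebra" "HOL-Computational_Algebra.Primes"
begin

definition p_elements :: "('a, 'b) monoid_scheme \<Rightarrow> nat \<Rightarrow> 'a set" where
  "p_elements G p = {x \<in> carrier G. \<exists>n. group.ord G x = p ^ n}"

definition Syl :: "('a, 'b) monoid_scheme \<Rightarrow> nat \<Rightarrow> 'a set set" where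
  "Syl G p = {P. subgroup P G \<and> card P = p ^ multiplicity p (order G)}"

definition has_redundant_Sylow :: "('a, 'b) monoid_scheme \<Rightarrow> nat \<Rightarrow> bool" where
  "has_redundant_Sylow G p \<longleftrightarrow> (\<exists>S. S \<subset> Syl G p \<and> p_elements G p \<subseteq> \<Union> S)"

end

(*
  The p-elements are covered by the Sylow p-subgroups, and such a cover is irredundant iff every
  member contains a point lying in no other member. A p-element x lying only in the Sylow
  subgroup P gives such a point g x g^-1 in every conjugate g P g^-1, and by Sylow's conjugacy
  theorem these are all Sylow p-subgroups. Conjugacy itself comes from a p-subgroup K acting on
  the right cosets of P: their number is prime to p, so K fixes some P a, whence a K a^-1 is
  contained in P.
*)

theory Submission
  imports Defs
begin

(* Multiset syntax would make every coset expression g <# H ambiguous. *)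
no_notation (ASCII) subset_mset (infix \<open><#\<close> 50)

lemma (in group) group_actionI:
  assumes closed: "\<And>g x. g \<in> carrier G \<Longrightarrow> x \<in> E \<Longrightarrow> act g x \<in> E"
    and act_one: "\<And>x. x \<in> E \<Longrightarrow> act \<one> x = x"
    and act_mult: "\<And>g h x. \<lbrakk>g \<in> carrier G; h \<in> carrier G; x \<in> E\<rbrakk> \<Longrightarrow>
                     act (g \<otimes> h) x = act g (act h x)"
  shows "group_action G E (\<lambda>g. \<lambda>x\<in>E. act g x)"
proof -
  have Bij: "(\<lambda>x\<in>E. act g x) \<in> Bij E" if g: "g \<in> carrier G" for g
  proof -
    have "act (inv g) (act g x) = x" "act g (act (inv g) x) = x" if "x \<in> E" for x
      using that g by (simp_all add: act_one flip: act_mult)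
    then have "bij_betw (act g) E E"
      by (intro bij_betwI[where g = "act (inv g)"]) (auto simp: g closed)
    then show ?thesis
      unfolding Bij_def by (simp add: bij_betw_cong[of E "\<lambda>x\<in>E. act g x" "act g"])
  qed
  have "(\<lambda>g. \<lambda>x\<in>E. act g x) \<in> hom G (BijGroup E)"
  proof (rule homI)
    show "(\<lambda>x\<in>E. act g x) \<in> carrier (BijGroup E)" if "g \<in> carrier G" for g
      using Bij[OF that] by (simp add: BijGroup_def)
    show "(\<lambda>x\<in>E. act (g \<otimes> h) x) = (\<lambda>x\<in>E. act g x) \<otimes>\<^bsub>BijGroup E\<^esub> (\<lambda>x\<in>E. act h x)"
      if "g \<in> carrier G" "h \<in> carrier G" for g h
      using that Bij by (auto simp: BijGroup_def compose_def act_mult closed)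
  qed
  then show ?thesis
    unfolding group_action_def group_hom_def group_hom_axioms_def
    using group_BijGroup is_group by blast
qed

lemma (in group) action_on_rcosets:
  assumes H: "subgroup H G"
  shows "group_action G (rcosets H) (\<lambda>g. \<lambda>C\<in>rcosets H. C #> inv g)"
proof (rule group_actionI)
  have C_carrier: "C \<subseteq> carrier G" if "C \<in> rcosets H" for C
    using subgroup.rcosets_carrier[OF H is_group that] .
  show "C #> inv g \<in> rcosets H" if "g \<in> carrier G" "C \<in> rcosets H" for g C
    using that H by (auto simp: RCOSETS_def coset_mult_assoc subgroup.subset intro!: rcosetsI)
  show "C #> inv \<one> = C" if "C \<in> rcosets H" for C
    using C_carrier[OF that] by simp
  show "C #> inv (g \<otimes> h) = C #> inv h #> inv g"
    if "g \<in> carrier G" "h \<in> carrier G" "C \<in> rcosets H" for g h C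
    using that C_carrier by (simp add: inv_mult_group coset_mult_assoc)
qed

lemma (in group_action) p_group_action_has_fixed_point:
  assumes p: "Factorial_Ring.prime p" and order: "order G = p ^ k" and not_dvd: "\<not> p dvd card E"
  shows "\<exists>x\<in>E. \<forall>g\<in>carrier G. \<phi> g x = x"
proof (rule ccontr)
  assume no_fixed_point: "\<not> ?thesis"
  have "finite E"
    using not_dvd card.infinite by force
  have "p dvd card orb" if orb: "orb \<in> orbits G E \<phi>" for orb
  proof -
    obtain x where x: "x \<in> E" "orb = orbit G \<phi> x"
      using orb unfolding orbits_def by blast
    have "card orb dvd p ^ k"
      using orbit_stabilizer_theorem[OF x(1)] x(2) order by (metis dvd_triv_left)
    then obtain j where j: "card orb = p ^ j"
      using p by (auto simp: divides_primepow_nat)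
    obtain g where g: "g \<in> carrier G" "\<phi> g x \<noteq> x"
      using no_fixed_point x(1) by blast
    have "{x, \<phi> g x} \<subseteq> orb"
      using orbit_refl[OF x(1)] g(1) x(2) unfolding orbit_def by blast
    moreover have "finite orb"
      using orb orbits_coverture \<open>finite E\<close> by (blast intro: finite_subset)
    ultimately have "card {x, \<phi> g x} \<le> card orb"
      by (rule card_mono[rotated])
    then have "2 \<le> card orb"
      using g(2) by simp
    then have "j \<noteq> 0"
      using j by (cases j) auto
    then show ?thesis
      using j by (simp add: dvd_power)
  qed
  then have "p dvd (\<Sum>orb\<in>orbits G E \<phi>. card orb)"
    by (simp add: dvd_sum)
  also have "(\<Sum>orb\<in>orbits G E \<phi>. card orb) = card E"
    using disjoint_sum[OF \<open>finite E\<close>, of "\<lambda>_. 1::nat"] by simp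
  finally show False
    using not_dvd by contradiction
qed

context group
begin

lemma conj_set_eq_image: "g <# H #> inv g = (\<lambda>h. g \<otimes> h \<otimes> inv g) ` H"
  unfolding l_coset_def r_coset_def by auto

lemma mem_conj_set_iff:
  assumes "g \<in> carrier G" "H \<subseteq> carrier G" "x \<in> carrier G"
  shows "x \<in> g <# H #> inv g \<longleftrightarrow> inv g \<otimes> x \<otimes> g \<in> H"
proof -
  have "x = g \<otimes> h \<otimes> inv g \<longleftrightarrow> inv g \<otimes> x \<otimes> g = h" if "h \<in> H" for h
    using assms that conjugation_is_surj[of g x] conjugation_is_surj[of "inv g" h] by auto
  then have "(\<exists>h\<in>H. x = g \<otimes> h \<otimes> inv g) \<longleftrightarrow> (\<exists>h\<in>H. inv g \<otimes> x \<otimes> g = h)"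
    by (rule bex_cong[OF refl])
  then show ?thesis
    unfolding conj_set_eq_image image_iff by simp
qed

lemma card_conj_set:
  assumes "g \<in> carrier G" "H \<subseteq> carrier G"
  shows "card (g <# H #> inv g) = card H"
  unfolding conj_set_eq_image
  by (rule card_image) (use assms in \<open>auto intro!: inj_onI dest: conjugation_is_inj\<close>)

lemma nat_pow_conj:
  assumes "g \<in> carrier G" "x \<in> carrier G"
  shows "(g \<otimes> x \<otimes> inv g) [^] (n::nat) = g \<otimes> x [^] n \<otimes> inv g"
proof (induction n)
  case 0
  show ?case
    using assms by simp
next
  case (Suc n)
  have "(g \<otimes> x [^] n \<otimes> inv g) \<otimes> (g \<otimes> x \<otimes> inv g) = g \<otimes> (x [^] n \<otimes> x) \<otimes> inv g"
    using assms by (simp add: m_assoc flip: m_assoc[of "inv g" g])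
  then show ?case
    using Suc by simp
qed

lemma ord_conj:
  assumes "g \<in> carrier G" "x \<in> carrier G"
  shows "ord (g \<otimes> x \<otimes> inv g) = ord x"
proof -
  have "(g \<otimes> x \<otimes> inv g) [^] n = \<one> \<longleftrightarrow> x [^] n = \<one>" for n :: nat
    using assms conjugation_is_inj[of g "x [^] n" \<one>] by (auto simp: nat_pow_conj)
  then show ?thesis
    using assms by (simp add: ord_unique pow_eq_id)
qed

lemma conj_p_elements:
  assumes "g \<in> carrier G" "x \<in> p_elements G p"
  shows "g \<otimes> x \<otimes> inv g \<in> p_elements G p"
  using assms ord_conj unfolding p_elements_def by auto

lemma Syl_nonempty:
  assumes "finite (carrier G)" "Factorial_Ring.prime p"
  shows "Syl G p \<noteq> {}"
proof -
  have "order G = p ^ multiplicity p (order G) * (order G div p ^ multiplicity p (order G))"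
    by (simp add: multiplicity_dvd)
  then obtain P where "subgroup P G" "card P = p ^ multiplicity p (order G)"
    using sylow_thm assms is_group by metis
  then show ?thesis
    unfolding Syl_def by blast
qed

lemma Syl_subset_carrier: "P \<in> Syl G p \<Longrightarrow> P \<subseteq> carrier G"
  unfolding Syl_def by (auto dest: subgroup.subset)

lemma conj_set_in_Syl:
  assumes "g \<in> carrier G" "P \<in> Syl G p"
  shows "g <# P #> inv g \<in> Syl G p"
  using assms unfolding Syl_def
  by (auto simp: subgroup_conjugation_is_surj2 card_conj_set subgroup.subset)

lemma not_dvd_card_rcosets_Syl:
  assumes fin: "finite (carrier G)" and p: "Factorial_Ring.prime p" and P: "P \<in> Syl G p"
  shows "\<not> p dvd card (rcosets P)"
proof
  assume "p dvd card (rcosets P)"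
  define a where "a = multiplicity p (order G)"
  have "subgroup P G" "card P = p ^ a"
    using P unfolding Syl_def a_def by auto
  then have "card (rcosets P) * p ^ a = order G"
    using lagrange by metis
  then have "p ^ Suc a dvd order G"
    using \<open>p dvd card (rcosets P)\<close> by (metis dvd_def mult_dvd_mono power_Suc dvd_refl)
  moreover have "order G \<noteq> 0"
    using fin by (simp add: order_gt_0_iff_finite)
  ultimately have "Suc a \<le> a"
    unfolding a_def using p by (intro multiplicity_geI) (auto simp: not_prime_unit)
  then show False
    by simp
qed

lemma p_subgroup_subset_conj_set_in_Syl:
  assumes fin: "finite (carrier G)" and p: "Factorial_Ring.prime p" and P: "P \<in> Syl G p"
    and K: "subgroup K G" "card K = p ^ k"
  shows "\<exists>g\<in>carrier G. K \<subseteq> g <# P #> inv g"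
proof -
  have P_subgroup: "subgroup P G"
    using P unfolding Syl_def by blast
  interpret K_action: group_action "G\<lparr>carrier := K\<rparr>" "rcosets P" "\<lambda>g. \<lambda>C\<in>rcosets P. C #> inv g"
    using group_action.induced_action[OF action_on_rcosets[OF P_subgroup] K(1)] .
  have K_order: "order (G\<lparr>carrier := K\<rparr>) = p ^ k"
    using K(2) by (simp add: order_def)
  obtain C where C: "C \<in> rcosets P" and fixed: "\<forall>h\<in>K. C #> inv h = C"
    using K_action.p_group_action_has_fixed_point[OF p K_order not_dvd_card_rcosets_Syl[OF fin p P]]
    by auto
  obtain a where a: "a \<in> carrier G" "C = P #> a"
    using C unfolding RCOSETS_def by blast
  have "h \<in> inv a <# P #> inv (inv a)" if h: "h \<in> K" for h
  proof -
    have h_carrier: "h \<in> carrier G"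
      using h K(1) subgroup.subset by blast
    have "P #> a #> h = P #> a"
      using fixed subgroup.m_inv_closed[OF K(1) h] a(2) h_carrier by force
    then have "P #> (a \<otimes> h) = P #> a"
      using a(1) h_carrier P_subgroup by (simp add: coset_mult_assoc subgroup.subset)
    then have "P #> (a \<otimes> h \<otimes> inv a) = P"
      using a(1) h_carrier P_subgroup by (simp add: coset_mult_inv2 subgroup.subset)
    then have "a \<otimes> h \<otimes> inv a \<in> P"
      using a(1) h_carrier P_subgroup by (simp add: coset_join1)
    then show ?thesis
      using mem_conj_set_iff[OF inv_closed[OF a(1)] subgroup.subset[OF P_subgroup] h_carrier] a(1)
      by simp
  qed
  then show ?thesis
    using a(1) by blast
qed

lemma Syl_conjugate:
  assumes fin: "finite (carrier G)" and p: "Factorial_Ring.prime p"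
    and P: "P \<in> Syl G p" and R: "R \<in> Syl G p"
  shows "\<exists>g\<in>carrier G. R = g <# P #> inv g"
proof -
  have R_Sylow: "subgroup R G" "card R = p ^ multiplicity p (order G)"
    using R unfolding Syl_def by auto
  obtain g where g: "g \<in> carrier G" "R \<subseteq> g <# P #> inv g"
    using p_subgroup_subset_conj_set_in_Syl[OF fin p P R_Sylow] by blast
  have conj_P: "g <# P #> inv g \<in> Syl G p"
    using conj_set_in_Syl[OF g(1) P] .
  then have "finite (g <# P #> inv g)"
    using fin Syl_subset_carrier finite_subset by blast
  moreover have "card R = card (g <# P #> inv g)"
    using R conj_P unfolding Syl_def by simp
  ultimately show ?thesis
    using g card_subset_eq by metis
qed

lemma p_elements_subset_Union_Syl:
  assumes fin: "finite (carrier G)" and p: "Factorial_Ring.prime p"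
  shows "p_elements G p \<subseteq> \<Union> (Syl G p)"
proof
  fix x
  assume "x \<in> p_elements G p"
  then obtain n where x: "x \<in> carrier G" "ord x = p ^ n"
    unfolding p_elements_def by blast
  obtain P where P: "P \<in> Syl G p"
    using Syl_nonempty[OF fin p] by blast
  have "subgroup (generate G {x}) G" "card (generate G {x}) = p ^ n"
    using x generate_is_subgroup generate_pow_card by auto
  then obtain g where g: "g \<in> carrier G" "generate G {x} \<subseteq> g <# P #> inv g"
    using p_subgroup_subset_conj_set_in_Syl[OF fin p P] by blast
  have "x \<in> generate G {x}"
    by (simp add: generate.incl)
  then show "x \<in> \<Union> (Syl G p)"
    using g conj_set_in_Syl[OF g(1) P] by blast
qed

lemma private_p_element_in_every_Syl:
  assumes fin: "finite (carrier G)" and p: "Factorial_Ring.prime p"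
    and x: "x \<in> p_elements G p" and P: "P \<in> Syl G p" "x \<in> P"
    and unique: "\<And>Q. Q \<in> Syl G p \<Longrightarrow> x \<in> Q \<Longrightarrow> Q = P"
    and R: "R \<in> Syl G p"
  shows "\<exists>y\<in>p_elements G p. \<forall>Q\<in>Syl G p. y \<in> Q \<longleftrightarrow> Q = R"
proof -
  have x_carrier: "x \<in> carrier G"
    using x unfolding p_elements_def by blast
  obtain g where g: "g \<in> carrier G" and R_conj: "R = g <# P #> inv g"
    using Syl_conjugate[OF fin p P(1) R] by blast
  have "g \<otimes> x \<otimes> inv g \<in> R"
    using R_conj P(2) by (simp add: conj_set_eq_image)
  moreover have "Q = R" if Q: "Q \<in> Syl G p" "g \<otimes> x \<otimes> inv g \<in> Q" for Q
  proof -
    have Q_carrier: "Q \<subseteq> carrier G"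
      using Syl_subset_carrier[OF Q(1)] .
    have "x \<in> inv g <# Q #> inv (inv g)"
      using mem_conj_set_iff[OF inv_closed[OF g] Q_carrier x_carrier] Q(2) g by simp
    then have "inv g <# Q #> g = P"
      using unique conj_set_in_Syl[OF inv_closed[OF g] Q(1)] g by simp
    then show "Q = R"
      using subgroup_conjugation_is_surj0[OF g Q_carrier] R_conj by simp
  qed
  ultimately show ?thesis
    using conj_p_elements[OF g x] R by blast
qed

end

lemma no_proper_subcover_iff:
  assumes "A \<subseteq> \<Union> F"
  shows "(\<nexists>F'. F' \<subset> F \<and> A \<subseteq> \<Union> F') \<longleftrightarrow> (\<forall>S\<in>F. \<exists>x\<in>A. \<forall>T\<in>F. x \<in> T \<longleftrightarrow> T = S)"
proof
  assume no_subcover: "\<nexists>F'. F' \<subset> F \<and> A \<subseteq> \<Union> F'"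
  show "\<forall>S\<in>F. \<exists>x\<in>A. \<forall>T\<in>F. x \<in> T \<longleftrightarrow> T = S"
  proof
    fix S
    assume "S \<in> F"
    then have "\<not> A \<subseteq> \<Union> (F - {S})"
      using no_subcover by blast
    then show "\<exists>x\<in>A. \<forall>T\<in>F. x \<in> T \<longleftrightarrow> T = S"
      using assms by blast
  qed
next
  assume private_points: "\<forall>S\<in>F. \<exists>x\<in>A. \<forall>T\<in>F. x \<in> T \<longleftrightarrow> T = S"
  show "\<nexists>F'. F' \<subset> F \<and> A \<subseteq> \<Union> F'"
  proof
    assume "\<exists>F'. F' \<subset> F \<and> A \<subseteq> \<Union> F'"
    then obtain F' where "F' \<subset> F" "A \<subseteq> \<Union> F'"
      by blast
    then obtain S where "S \<in> F" "S \<notin> F'"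
      by blast
    then obtain x where x: "x \<in> A" and private_x: "\<forall>T\<in>F. x \<in> T \<longleftrightarrow> T = S"
      using private_points by blast
    obtain T where T: "T \<in> F'" "x \<in> T"
      using x \<open>A \<subseteq> \<Union> F'\<close> by blast
    then have "T \<in> F"
      using \<open>F' \<subset> F\<close> by blast
    then have "T = S"
      using private_x T(2) by blast
    then show False
      using T(1) \<open>S \<notin> F'\<close> by simp
  qed
qed

theorem lemma2p1:
  fixes G (structure) and p :: nat
  assumes "group G" and "finite (carrier G)" and "Factorial_Ring.prime p"
  shows "\<not> has_redundant_Sylow G p \<longleftrightarrow>
           (\<exists>x \<in> p_elements G p. \<exists>!P. P \<in> Syl G p \<and> x \<in> P)"
proof -
  interpret group G by (rule assms(1))
  note fin = assms(2) and p = assms(3)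
  have "\<not> has_redundant_Sylow G p \<longleftrightarrow>
          (\<forall>R\<in>Syl G p. \<exists>x\<in>p_elements G p. \<forall>Q\<in>Syl G p. x \<in> Q \<longleftrightarrow> Q = R)"
    unfolding has_redundant_Sylow_def
    by (rule no_proper_subcover_iff[OF p_elements_subset_Union_Syl[OF fin p]])
  also have "\<dots> \<longleftrightarrow> (\<exists>x\<in>p_elements G p. \<exists>!P. P \<in> Syl G p \<and> x \<in> P)"
  proof
    assume "\<forall>R\<in>Syl G p. \<exists>x\<in>p_elements G p. \<forall>Q\<in>Syl G p. x \<in> Q \<longleftrightarrow> Q = R"
    then show "\<exists>x\<in>p_elements G p. \<exists>!P. P \<in> Syl G p \<and> x \<in> P"
      using Syl_nonempty[OF fin p] by (metis equals0I)
  next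
    assume "\<exists>x\<in>p_elements G p. \<exists>!P. P \<in> Syl G p \<and> x \<in> P"
    then obtain x P where "x \<in> p_elements G p" "P \<in> Syl G p" "x \<in> P"
      and "\<And>Q. Q \<in> Syl G p \<Longrightarrow> x \<in> Q \<Longrightarrow> Q = P"
      by metis
    then show "\<forall>R\<in>Syl G p. \<exists>y\<in>p_elements G p. \<forall>Q\<in>Syl G p. y \<in> Q \<longleftrightarrow> Q = R"
      using private_p_element_in_every_Syl[OF fin p] by blast
  qed
  finally show ?thesis .
qed

end
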